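(* For $R\in\mathbb C$ let $$\phi(R)=\begin{pmatrix} R & 1+R\\ 1-R & -R\end{pmatrix}.$$ For a $2\times2$ matrix $X=\begin{pmatrix}\alpha&\beta\\ \gamma&\delta\end{pmatrix}$ and $1\le i<j\le 3$, let $X_{ij}$ denote the $3\times3$ matrix equal to the identity except $(X_{ij})_{ii}=\alpha$, $(X_{ij})_{ij}=\beta$, $(X_{ij})_{ji}=\gamma$, $(X_{ij})_{jj}=\delta$, and write $\phi_{ij}(R)=(\phi(R))_{ij}$. Let $x_1,x_2,x_3\in\mathbb C$ with $D:=x_1+x_3-x_1x_2x_3\neq 0$, and put $$x_1'=\frac{x_1x_2}{D},\qquad x_2'=D,\qquad x_3'=\frac{x_2x_3}{D}.$$ Then $$\phi_{12}(x_1)\,\phi_{13}(x_2)\,\phi_{23}(x_3)=\phi_{23}(x_3')\,\phi_{13}(x_2')\,\phi_{12}(x_1').$$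
   Context: $\phi(R)$ is the "Ohm–Yang–Baxter operator" attached to black vertices of the medial graph of an electrical network. *)

theory Defs
  imports "HOL-Analysis.Analysis"
begin

text \<open>2x2 matrices indexed by type 2 (index 1 = first, 2 = second row/col);
3x3 matrices indexed by type 3.  We write the 3x3 index k (1<=k<=3) as the
element idx3 k of type 3.\<close>

definition idx3 :: "nat \<Rightarrow> 3" where
  "idx3 k = of_nat (k - 1)"

definition idx2 :: "nat \<Rightarrow> 2" where
  "idx2 k = of_nat (k - 1)"

definition phi :: "complex \<Rightarrow> complex^2^2" where
  "phi R = (\<chi> a b. if a = idx2 1 then (if b = idx2 1 then R else 1 + R)
                      else (if b = idx2 1 then 1 - R else - R))"

definition embed :: "complex^2^2 \<Rightarrow> nat \<Rightarrow> nat \<Rightarrow> complex^3^3" where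
  "embed X i j = (\<chi> a b.
     if a = idx3 i \<and> b = idx3 i then X $ idx2 1 $ idx2 1
     else if a = idx3 i \<and> b = idx3 j then X $ idx2 1 $ idx2 2
     else if a = idx3 j \<and> b = idx3 i then X $ idx2 2 $ idx2 1
     else if a = idx3 j \<and> b = idx3 j then X $ idx2 2 $ idx2 2
     else (if a = b then 1 else 0))"

definition phi_ij :: "nat \<Rightarrow> nat \<Rightarrow> complex \<Rightarrow> complex^3^3" where
  "phi_ij i j R = embed (phi R) i j"

end

theory Submission
  imports Defs
begin

text \<open>Multiplying out, each of the
nine entries of the right-hand side is a rational function with denominator a power of
\<open>D = x1 + x3 - x1 x2 x3\<close>; after clearing denominators every entry identity is a polynomial
identity in \<open>x1, x2, x3\<close>.\<close>

lemma idx3_simps: "idx3 1 = 3" "idx3 2 = 1" "idx3 3 = 2"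
  by (simp_all add: idx3_def)

lemma idx2_simps: "idx2 1 = 2" "idx2 2 = 1"
  by (simp_all add: idx2_def)

text \<open>Matrices written in the paper's row/column order; note that the paper's index 1
is the element \<open>3 = 0\<close> of the index type \<open>3\<close>.\<close>

definition mat3 ::
  "'a \<Rightarrow> 'a \<Rightarrow> 'a \<Rightarrow> 'a \<Rightarrow> 'a \<Rightarrow> 'a \<Rightarrow> 'a \<Rightarrow> 'a \<Rightarrow> 'a \<Rightarrow> 'a^3^3" where
  "mat3 a11 a12 a13 a21 a22 a23 a31 a32 a33 =
     (\<chi> r c. if r = idx3 1 then (if c = idx3 1 then a11 else if c = idx3 2 then a12 else a13)
            else if r = idx3 2 then (if c = idx3 1 then a21 else if c = idx3 2 then a22 else a23)
            else (if c = idx3 1 then a31 else if c = idx3 2 then a32 else a33))"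

lemma mat3_eq_iff:
  "mat3 a11 a12 a13 a21 a22 a23 a31 a32 a33 = mat3 b11 b12 b13 b21 b22 b23 b31 b32 b33 \<longleftrightarrow>
     a11 = b11 \<and> a12 = b12 \<and> a13 = b13 \<and> a21 = b21 \<and> a22 = b22 \<and> a23 = b23 \<and>
     a31 = b31 \<and> a32 = b32 \<and> a33 = b33"
  unfolding mat3_def idx3_simps by (auto simp: vec_eq_iff forall_3)

lemma mat3_mult:
  fixes a11 a12 a13 a21 a22 a23 a31 a32 a33 :: "'a::semiring_1"
  shows "mat3 a11 a12 a13 a21 a22 a23 a31 a32 a33 ** mat3 b11 b12 b13 b21 b22 b23 b31 b32 b33 =
    mat3 (a11*b11 + a12*b21 + a13*b31) (a11*b12 + a12*b22 + a13*b32) (a11*b13 + a12*b23 + a13*b33)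
         (a21*b11 + a22*b21 + a23*b31) (a21*b12 + a22*b22 + a23*b32) (a21*b13 + a22*b23 + a23*b33)
         (a31*b11 + a32*b21 + a33*b31) (a31*b12 + a32*b22 + a33*b32) (a31*b13 + a32*b23 + a33*b33)"
  unfolding mat3_def idx3_simps
  by (simp add: vec_eq_iff forall_3 sum_3 matrix_matrix_mult_def algebra_simps)

lemma phi_nth:
  "phi R $ idx2 1 $ idx2 1 = R" "phi R $ idx2 1 $ idx2 2 = 1 + R"
  "phi R $ idx2 2 $ idx2 1 = 1 - R" "phi R $ idx2 2 $ idx2 2 = - R"
  unfolding phi_def idx2_simps by simp_all

lemma phi_ij_12: "phi_ij 1 2 R = mat3 R (1 + R) 0 (1 - R) (- R) 0 0 0 1"
  unfolding phi_ij_def embed_def mat3_def phi_nth idx3_simps by (simp add: vec_eq_iff forall_3)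

lemma phi_ij_13: "phi_ij 1 3 R = mat3 R 0 (1 + R) 0 1 0 (1 - R) 0 (- R)"
  unfolding phi_ij_def embed_def mat3_def phi_nth idx3_simps by (simp add: vec_eq_iff forall_3)

lemma phi_ij_23: "phi_ij 2 3 R = mat3 1 0 0 0 R (1 + R) 0 (1 - R) (- R)"
  unfolding phi_ij_def embed_def mat3_def phi_nth idx3_simps by (simp add: vec_eq_iff forall_3)

theorem theorem3p6:
  fixes x1 x2 x3 :: complex
  assumes "x1 + x3 - x1 * x2 * x3 \<noteq> 0"
  shows "let D = x1 + x3 - x1 * x2 * x3;
             x1' = x1 * x2 / D; x2' = D; x3' = x2 * x3 / D
         in phi_ij 1 2 x1 ** phi_ij 1 3 x2 ** phi_ij 2 3 x3
            = phi_ij 2 3 x3' ** phi_ij 1 3 x2' ** phi_ij 1 2 x1'"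
proof -
  define D where "D = x1 + x3 - x1 * x2 * x3"
  have "D \<noteq> 0"
    using assms by (simp add: D_def)
  then show ?thesis
    unfolding Let_def D_def[symmetric] phi_ij_12 phi_ij_13 phi_ij_23 mat3_mult mat3_eq_iff
    by (simp add: field_simps, unfold D_def, algebra)
qed

end
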